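(* Fix $h_{pd},h_{ps},h_{sd}\in(0,1]$, $\lambda_p,\lambda_s\in(0,1)$, $\psi>0$ and $\mu_p\in[h_{pd},h_{pd}+(1-h_{pd})h_{ps}]$ with $\mu_p>\lambda_p$. Let P2 be: maximize $b\,h_{sd}(1-\lambda_p/\mu_p)$ over $b\in[0,1]$ subject to $\phi_\psi(b)\le 0$; and P4 be: minimize $N_s(b)/\lambda_s$ over $b\in[0,1]$ subject to $\phi_\psi(b)\le 0$ and $b\,h_{sd}(\mu_p-\lambda_p)>\lambda_s\mu_p$. Suppose P2 has an optimal solution $b^*(\mu_p)$ with $b^*(\mu_p)\,h_{sd}(\mu_p-\lambda_p)>\lambda_s\mu_p$. Then $b^*(\mu_p)$ is the (unique) optimal solution of P4; i.e., for fixed $\mu_p$, maximizing the SU throughput and minimizing the average SU packet delay under the PU delay constraint yield the same optimal $b$.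
   Context: Model: PU queue $Q_p$, SU queues $Q_s$, $Q_{sp}$; $h_{pd},h_{sd},h_{ps}$ link success probabilities; $\lambda_p,\lambda_s$ arrival rates; $b\in[0,1]$ the probability the SU serves $Q_s$ when the PU is idle; $\mu_p=h_{pd}+(1-h_{pd})h_{ps}a$ the PU service rate, $a\in[0,1]$. Write $\bar b=1-b$, $\bar\mu_p=1-\mu_p$, $N_p=\frac{\lambda_p-\lambda_p^2}{\mu_p-\lambda_p}$, $$\phi_\psi(b)=\lambda_p(\mu_p-h_{pd})\big(\bar b h_{sd}\bar\mu_p\lambda_p-(\mu_p-h_{pd})\mu_p\lambda_p-h_{pd}\lambda_p+\mu_p^2\big)-\mu_p(\mu_p-\lambda_p)\big(\bar b h_{sd}(\mu_p-\lambda_p)-\lambda_p(\mu_p-h_{pd})\big)(\lambda_p\psi-N_p),$$ $$N_s(b)=\frac{b\,h_{sd}\lambda_p\lambda_s(1-\mu_p)+(\lambda_s-\lambda_s^2)(\mu_p-\lambda_p)\mu_p}{(\mu_p-\lambda_p)\big(b\,h_{sd}(\mu_p-\lambda_p)-\lambda_s\mu_p\big)}.$$ *)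

theory Defs
  imports Complex_Main
begin

definition Np :: "real \<Rightarrow> real \<Rightarrow> real" where
  "Np lp mp = (lp - lp^2) / (mp - lp)"

definition phi :: "real \<Rightarrow> real \<Rightarrow> real \<Rightarrow> real \<Rightarrow> real \<Rightarrow> real \<Rightarrow> real" where
  "phi hpd hsd lp mp psi b =
     lp * (mp - hpd) * ((1 - b) * hsd * (1 - mp) * lp - (mp - hpd) * mp * lp - hpd * lp + mp^2)
     - mp * (mp - lp) * ((1 - b) * hsd * (mp - lp) - lp * (mp - hpd)) * (lp * psi - Np lp mp)"

definition Ns :: "real \<Rightarrow> real \<Rightarrow> real \<Rightarrow> real \<Rightarrow> real \<Rightarrow> real" where
  "Ns hsd lp ls mp b =
     (b * hsd * lp * ls * (1 - mp) + (ls - ls^2) * (mp - lp) * mp)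
     / ((mp - lp) * (b * hsd * (mp - lp) - ls * mp))"

definition feas2 :: "real \<Rightarrow> real \<Rightarrow> real \<Rightarrow> real \<Rightarrow> real \<Rightarrow> real set" where
  "feas2 hpd hsd lp mp psi = {b. 0 \<le> b \<and> b \<le> 1 \<and> phi hpd hsd lp mp psi b \<le> 0}"

definition feas4 :: "real \<Rightarrow> real \<Rightarrow> real \<Rightarrow> real \<Rightarrow> real \<Rightarrow> real \<Rightarrow> real set" where
  "feas4 hpd hsd lp ls mp psi =
     {b \<in> feas2 hpd hsd lp mp psi. b * hsd * (mp - lp) > ls * mp}"

definition opt2 :: "real \<Rightarrow> real \<Rightarrow> real \<Rightarrow> real \<Rightarrow> real \<Rightarrow> real \<Rightarrow> bool" where
  "opt2 hpd hsd lp mp psi b \<longleftrightarrow> b \<in> feas2 hpd hsd lp mp psi \<and>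
     (\<forall>b' \<in> feas2 hpd hsd lp mp psi. b' * hsd * (1 - lp / mp) \<le> b * hsd * (1 - lp / mp))"

definition opt4 :: "real \<Rightarrow> real \<Rightarrow> real \<Rightarrow> real \<Rightarrow> real \<Rightarrow> real \<Rightarrow> real \<Rightarrow> bool" where
  "opt4 hpd hsd lp ls mp psi b \<longleftrightarrow> b \<in> feas4 hpd hsd lp ls mp psi \<and>
     (\<forall>b' \<in> feas4 hpd hsd lp ls mp psi. Ns hsd lp ls mp b / ls \<le> Ns hsd lp ls mp b' / ls)"

end

theory Submission
  imports Defs
begin

text \<open>Among the feasible points of P2 the optimum is the largest, since the throughput
  objective is a positive multiple of b; and the SU delay N_s is strictly decreasing on the
  stability region, so the largest stable feasible point is the unique minimiser of P4.\<close>

lemma linear_fraction_strict_decreasing: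
  fixes a b c e x y :: real
  assumes "0 < a * e + b * c" "x < y" "0 < c * x - e" "0 < c * y - e"
  shows "(a * y + b) / (c * y - e) < (a * x + b) / (c * x - e)"
proof -
  have "(a * x + b) * (c * y - e) - (a * y + b) * (c * x - e) = (a * e + b * c) * (y - x)"
    by (simp add: algebra_simps)
  also have "\<dots> > 0" using assms(1,2) by simp
  finally show ?thesis using assms(3,4) by (simp add: divide_simps)
qed

lemma Ns_strict_decreasing:
  fixes hsd lp ls mp b1 b2 :: real
  assumes "0 < hsd" "0 < lp" "0 < ls" "ls < 1" "mp \<le> 1" "lp < mp"
    and "b1 < b2" "ls * mp < b1 * hsd * (mp - lp)" "ls * mp < b2 * hsd * (mp - lp)"
  shows "Ns hsd lp ls mp b2 < Ns hsd lp ls mp b1"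
proof -
  define A where "A = hsd * lp * ls * (1 - mp)"
  define B where "B = (ls - ls^2) * (mp - lp) * mp"
  define C where "C = (mp - lp) * hsd * (mp - lp)"
  define E where "E = (mp - lp) * ls * mp"
  have Ns_eq: "Ns hsd lp ls mp b = (A * b + B) / (C * b - E)" for b
    unfolding Ns_def A_def B_def C_def E_def by (simp add: algebra_simps)
  have "0 \<le> A" "0 < B" "0 < C" "0 < E"
    using assms unfolding A_def B_def C_def E_def
    by (auto simp: power2_eq_square intro!: mult_pos_pos)
  then have "0 < A * E + B * C" by (simp add: add_nonneg_pos)
  moreover have "C * b - E = (mp - lp) * (b * hsd * (mp - lp) - ls * mp)" for b
    unfolding C_def E_def by (simp add: algebra_simps)
  then have "0 < C * b1 - E" "0 < C * b2 - E"
    using assms(6,8,9) by simp_all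
  ultimately show ?thesis
    unfolding Ns_eq using linear_fraction_strict_decreasing assms(7) by blast
qed

lemma opt2_maximal:
  assumes "0 < hsd" "0 < lp" "lp < mp"
    and "opt2 hpd hsd lp mp psi bstar" "b \<in> feas2 hpd hsd lp mp psi"
  shows "b \<le> bstar"
proof -
  have "0 < hsd * (1 - lp / mp)" using assms(1-3) by simp
  moreover have "hsd * (1 - lp / mp) * b \<le> hsd * (1 - lp / mp) * bstar"
    using assms(4,5) unfolding opt2_def by (simp add: ac_simps)
  ultimately show ?thesis by (rule mult_le_cancel_left_pos[THEN iffD1])
qed

theorem lemma2:
  fixes hpd hps hsd lp ls psi mp bstar :: real
  assumes "0 < hpd" "hpd \<le> 1" "0 < hps" "hps \<le> 1" "0 < hsd" "hsd \<le> 1"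
    and "0 < lp" "lp < 1" "0 < ls" "ls < 1" "0 < psi"
    and "hpd \<le> mp" "mp \<le> hpd + (1 - hpd) * hps" "mp > lp"
    and "opt2 hpd hsd lp mp psi bstar"
    and "bstar * hsd * (mp - lp) > ls * mp"
  shows "opt4 hpd hsd lp ls mp psi bstar \<and>
         (\<forall>b. opt4 hpd hsd lp ls mp psi b \<longrightarrow> b = bstar)"
proof -
  have "(1 - hpd) * hps \<le> 1 - hpd" using assms(2,4) by (simp add: mult_left_le)
  with assms(13) have "mp \<le> 1" by simp
  have bstar_feas: "bstar \<in> feas4 hpd hsd lp ls mp psi"
    using assms(15,16) unfolding opt2_def feas4_def by simp
  have smaller_delay: "Ns hsd lp ls mp bstar / ls < Ns hsd lp ls mp b / ls"
    if "b \<in> feas4 hpd hsd lp ls mp psi" "b \<noteq> bstar" for b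
  proof -
    have "b < bstar"
      using that opt2_maximal[OF assms(5,7,14,15)] unfolding feas4_def by force
    then show ?thesis
      using that Ns_strict_decreasing[of hsd lp ls mp b bstar] assms \<open>mp \<le> 1\<close>
      unfolding feas4_def by (simp add: divide_strict_right_mono)
  qed
  have "opt4 hpd hsd lp ls mp psi bstar"
    unfolding opt4_def using bstar_feas smaller_delay by (metis order.order_iff_strict)
  moreover have "b = bstar" if "opt4 hpd hsd lp ls mp psi b" for b
    using that bstar_feas smaller_delay unfolding opt4_def by (meson not_less)
  ultimately show ?thesis by blast
qed

end
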